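(* Let $S=\langle T,\Pi,C\rangle$ be a state space and let $(A_i,\psi_i)$, $1\le i\le k$, be abstractions of $S$ forming an additive abstraction system, and let $t,g\in T$. If $h_{add}(t,g)\ge C^*_j(t_j,g_j)+R^*_j(t_j,g_j)$ for all $j\in\{1,\dots,k\}$, then $h_{add}(t,g)\ge h_{max}(t,g)$.
   Context: A state space is a weighted directed graph $S=\langle T,\Pi,C\rangle$ where $T$ is a finite set of states, $\Pi\subseteq T\times T$ is a set of directed edges, and $C:\Pi\to\mathbb{N}=\{0,1,2,\dots\}$. A path from $u$ to $v$ is a sequence of edges $\langle\pi^1,\dots,\pi^n\rangle$ with $\pi^j=(u^{j-1},u^j)\in\Pi$, $u^0=u$, $u^n=v$. An abstract state space is $A_i=\langle T_i,\Pi_i,C_i,R_i\rangle$ with $T_i$ a set of abstract states, $\Pi_i\subseteq T_i\times T_i$, and edge weights $C_i,R_i:\Pi_i\to\mathbb{N}$ (primary and residual cost), extended additively to paths. An abstraction of $S$ is a pair $(A_i,\psi_i)$ with $\psi_i:T\to T_i$ such that (1) for every $(u,v)\in\Pi$, $(\psi_i(u),\psi_i(v))\in\Pi_i$, and (2) for every $\pi=(u,v)\in\Pi$, $C_i(\pi_i)+R_i(\pi_i)\le C(\pi)$ where $\pi_i=(\psi_i(u),\psi_i(v))$. The system is additive if for every $\pi\in\Pi$, $\sum_{i=1}^k C_i(\pi_i)\le C(\pi)$. Write $t_i=\psi_i(t)$. Minima over empty sets are $+\infty$. Define $OPT_i(x,y)=\min\{C_i(\rho)+R_i(\rho):\rho\text{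 a path from }x\text{ to }y\text{ in }A_i\}$, $h_i(t,g)=OPT_i(t_i,g_i)$, $h_{max}(t,g)=\max_{1\le i\le k}h_i(t,g)$; $C^*_i(x,y)=\min\{C_i(\rho):\rho\text{ a path from }x\text{ to }y\text{ in }A_i\}$, $h_{add}(t,g)=\sum_{i=1}^k C^*_i(t_i,g_i)$; $P_i(x,y)$ is the set of paths $\rho$ from $x$ to $y$ in $A_i$ with $C_i(\rho)=C^*_i(x,y)$, and $R^*_i(x,y)=\min_{\rho\in P_i(x,y)}R_i(\rho)$ (the conditional optimal residual cost). *)

theory Defs
  imports Main "HOL-Library.Extended_Nat"
begin

fun is_path :: "('b \<times> 'b) set \<Rightarrow> 'b \<Rightarrow> 'b \<Rightarrow> ('b \<times> 'b) list \<Rightarrow> bool" where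
  "is_path E x y [] = (x = y)"
| "is_path E x y (e # es) = (e \<in> E \<and> fst e = x \<and> is_path E (snd e) y es)"

definition path_cost :: "('b \<times> 'b \<Rightarrow> nat) \<Rightarrow> ('b \<times> 'b) list \<Rightarrow> nat" where
  "path_cost c \<rho> = sum_list (map c \<rho>)"

definition state_space :: "'a set \<Rightarrow> ('a \<times> 'a) set \<Rightarrow> bool" where
  "state_space T Pi \<longleftrightarrow> finite T \<and> Pi \<subseteq> T \<times> T"

definition abstract_space :: "'b set \<Rightarrow> ('b \<times> 'b) set \<Rightarrow> bool" where
  "abstract_space Ti Pii \<longleftrightarrow> Pii \<subseteq> Ti \<times> Ti"

definition is_abstraction ::
  "'a set \<Rightarrow> ('a \<times> 'a) set \<Rightarrow> ('a \<times> 'a \<Rightarrow> nat)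
   \<Rightarrow> 'b set \<Rightarrow> ('b \<times> 'b) set \<Rightarrow> ('b \<times> 'b \<Rightarrow> nat) \<Rightarrow> ('b \<times> 'b \<Rightarrow> nat) \<Rightarrow> ('a \<Rightarrow> 'b) \<Rightarrow> bool" where
  "is_abstraction T Pi C Ti Pii Ci Ri psi \<longleftrightarrow>
     abstract_space Ti Pii \<and> (\<forall>t\<in>T. psi t \<in> Ti) \<and>
     (\<forall>(u,v)\<in>Pi. (psi u, psi v) \<in> Pii) \<and>
     (\<forall>(u,v)\<in>Pi. Ci (psi u, psi v) + Ri (psi u, psi v) \<le> C (u,v))"

definition additive ::
  "nat \<Rightarrow> ('a \<times> 'a) set \<Rightarrow> ('a \<times> 'a \<Rightarrow> nat) \<Rightarrow> (nat \<Rightarrow> 'b \<times> 'b \<Rightarrow> nat) \<Rightarrow> (nat \<Rightarrow> 'a \<Rightarrow> 'b) \<Rightarrow> bool" where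
  "additive k Pi C Cs psis \<longleftrightarrow>
     (\<forall>(u,v)\<in>Pi. (\<Sum>i=1..k. Cs i (psis i u, psis i v)) \<le> C (u,v))"

(* minima over empty sets are +infinity: we use Inf on enat *)
definition OPT :: "('b \<times> 'b) set \<Rightarrow> ('b \<times> 'b \<Rightarrow> nat) \<Rightarrow> ('b \<times> 'b \<Rightarrow> nat) \<Rightarrow> 'b \<Rightarrow> 'b \<Rightarrow> enat" where
  "OPT E c r x y = Inf {enat (path_cost c \<rho> + path_cost r \<rho>) | \<rho>. is_path E x y \<rho>}"

definition Cstar :: "('b \<times> 'b) set \<Rightarrow> ('b \<times> 'b \<Rightarrow> nat) \<Rightarrow> 'b \<Rightarrow> 'b \<Rightarrow> enat" where
  "Cstar E c x y = Inf {enat (path_cost c \<rho>) | \<rho>. is_path E x y \<rho>}"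

definition Pset :: "('b \<times> 'b) set \<Rightarrow> ('b \<times> 'b \<Rightarrow> nat) \<Rightarrow> 'b \<Rightarrow> 'b \<Rightarrow> ('b \<times> 'b) list set" where
  "Pset E c x y = {\<rho>. is_path E x y \<rho> \<and> enat (path_cost c \<rho>) = Cstar E c x y}"

definition Rstar :: "('b \<times> 'b) set \<Rightarrow> ('b \<times> 'b \<Rightarrow> nat) \<Rightarrow> ('b \<times> 'b \<Rightarrow> nat) \<Rightarrow> 'b \<Rightarrow> 'b \<Rightarrow> enat" where
  "Rstar E c r x y = Inf {enat (path_cost r \<rho>) | \<rho>. \<rho> \<in> Pset E c x y}"

definition h_i :: "('b \<times> 'b) set \<Rightarrow> ('b \<times> 'b \<Rightarrow> nat) \<Rightarrow> ('b \<times> 'b \<Rightarrow> nat) \<Rightarrow> ('a \<Rightarrow> 'b) \<Rightarrow> 'a \<Rightarrow> 'a \<Rightarrow> enat" where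
  "h_i Pii Ci Ri psi t g = OPT Pii Ci Ri (psi t) (psi g)"

definition h_max :: "nat \<Rightarrow> (nat \<Rightarrow> ('b \<times> 'b) set) \<Rightarrow> (nat \<Rightarrow> 'b \<times> 'b \<Rightarrow> nat) \<Rightarrow> (nat \<Rightarrow> 'b \<times> 'b \<Rightarrow> nat)
   \<Rightarrow> (nat \<Rightarrow> 'a \<Rightarrow> 'b) \<Rightarrow> 'a \<Rightarrow> 'a \<Rightarrow> enat" where
  "h_max k Pis Cs Rs psis t g = Max ((\<lambda>i. h_i (Pis i) (Cs i) (Rs i) (psis i) t g) ` {1..k})"

definition h_add :: "nat \<Rightarrow> (nat \<Rightarrow> ('b \<times> 'b) set) \<Rightarrow> (nat \<Rightarrow> 'b \<times> 'b \<Rightarrow> nat)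
   \<Rightarrow> (nat \<Rightarrow> 'a \<Rightarrow> 'b) \<Rightarrow> 'a \<Rightarrow> 'a \<Rightarrow> enat" where
  "h_add k Pis Cs psis t g = (\<Sum>i=1..k. Cstar (Pis i) (Cs i) (psis i t) (psis i g))"

end

theory Submission
  imports Defs
begin

text \<open>Each \<open>h\<^sub>i\<close> is at most \<open>C\<^sup>*\<^sub>i + R\<^sup>*\<^sub>i\<close>, because a path of minimal primary cost that also minimises
  the residual cost among those paths is one of the candidates in the minimum defining \<open>OPT\<^sub>i\<close>.
  The hypothesis bounds each \<open>C\<^sup>*\<^sub>j + R\<^sup>*\<^sub>j\<close> by \<open>h_add\<close>, hence the maximum of the \<open>h\<^sub>j\<close> as well.\<close>

lemma Inf_enat_in:
  fixes S :: "enat set"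
  assumes "Inf S \<noteq> \<infinity>"
  shows "Inf S \<in> S"
proof -
  from assms have "S \<noteq> {}" by (auto simp: Inf_enat_def)
  then show ?thesis by (auto simp: Inf_enat_def intro: LeastI)
qed

lemma OPT_le_Cstar_plus_Rstar:
  "OPT E c r x y \<le> Cstar E c x y + Rstar E c r x y"
proof (cases "Rstar E c r x y = \<infinity>")
  case True
  then show ?thesis by simp
next
  case False
  from Inf_enat_in[OF False[unfolded Rstar_def]]
  obtain \<rho> where "\<rho> \<in> Pset E c x y" and R: "Rstar E c r x y = enat (path_cost r \<rho>)"
    unfolding Rstar_def by auto
  then have path: "is_path E x y \<rho>" and C: "Cstar E c x y = enat (path_cost c \<rho>)"
    unfolding Pset_def by auto
  have "OPT E c r x y \<le> enat (path_cost c \<rho> + path_cost r \<rho>)"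
    unfolding OPT_def using path by (auto intro: Inf_lower)
  also have "\<dots> = Cstar E c x y + Rstar E c r x y"
    by (simp add: C R)
  finally show ?thesis .
qed

theorem lemma6:
  fixes T :: "'a set" and Pi :: "('a \<times> 'a) set" and C :: "'a \<times> 'a \<Rightarrow> nat"
    and k :: nat
    and Ts :: "nat \<Rightarrow> 'b set" and Pis :: "nat \<Rightarrow> ('b \<times> 'b) set"
    and Cs Rs :: "nat \<Rightarrow> 'b \<times> 'b \<Rightarrow> nat" and psis :: "nat \<Rightarrow> 'a \<Rightarrow> 'b"
    and t g :: 'a
  assumes "state_space T Pi"
    and "1 \<le> k"
    and "\<forall>i\<in>{1..k}. is_abstraction T Pi C (Ts i) (Pis i) (Cs i) (Rs i) (psis i)"
    and "additive k Pi C Cs psis"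
    and "t \<in> T" and "g \<in> T"
    and "\<forall>j\<in>{1..k}. h_add k Pis Cs psis t g \<ge>
           Cstar (Pis j) (Cs j) (psis j t) (psis j g) + Rstar (Pis j) (Cs j) (Rs j) (psis j t) (psis j g)"
  shows "h_add k Pis Cs psis t g \<ge> h_max k Pis Cs Rs psis t g"
proof -
  have "h_i (Pis j) (Cs j) (Rs j) (psis j) t g \<le> h_add k Pis Cs psis t g" if "j \<in> {1..k}" for j
    unfolding h_i_def using assms(7) that by (auto intro: order_trans[OF OPT_le_Cstar_plus_Rstar])
  then show ?thesis
    using assms(2) unfolding h_max_def by simp
qed

end
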